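(* Let $n\ge 2$ and $1\le i,j\le n$, and let $E_{ij}\in\{0,1\}^{n\times n}$ be the basis matrix with $(E_{ij})_{kl}=\delta_{ik}\delta_{jl}$. If $E_{ij}$ is decomposable, then $E_{ij}$ is maximal, i.e. for every compatible pair $(n_1,n_2)$ there exist $X\in\{0,1\}^{n_1\times n_1}$, $Y\in\{0,1\}^{n_2\times n_2}$ with $E_{ij}=X\otimes Y$.
   Context: Kronecker products of binary matrices use Boolean arithmetic ($1+1=1$). A matrix $A\in\{0,1\}^{n\times n}$ is decomposable if there exist $\ell>1$ and $A_i\in\{0,1\}^{n_i\times n_i}$ with $n_i>1$ such that $A=A_1\otimes\cdots\otimes A_\ell$. A compatible pair for $n$ is a pair $(n_1,n_2)$ of positive divisors of $n$, both different from $1$ and $n$, with $n_1n_2=n$. A decomposable matrix is maximal if it admits an $(n_1,n_2)$ factorization $A=A_1\otimes A_2$ ($A_i\in\{0,1\}^{n_i\times n_i}$) for every compatible pair $(n_1,n_2)$. *)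

theory Defs
  imports Main
begin

text \<open>A square binary matrix is represented as a pair (size, entries), where the
entries are a Boolean-valued function on 0-based indices; only entries with
both indices below the size are meaningful.\<close>

type_synonym bmat = "nat \<times> (nat \<Rightarrow> nat \<Rightarrow> bool)"

definition bmat_eq :: "bmat \<Rightarrow> bmat \<Rightarrow> bool" where
  "bmat_eq M N \<longleftrightarrow> fst M = fst N \<and>
     (\<forall>k < fst M. \<forall>l < fst M. snd M k l = snd N k l)"

text \<open>Kronecker product with Boolean arithmetic (each entry of the Kronecker
product is a single product of entries, so it is a conjunction).\<close>
definition kron :: "bmat \<Rightarrow> bmat \<Rightarrow> bmat" where
  "kron M N = (fst M * fst N,
     \<lambda>k l. snd M (k div fst N) (l div fst N) \<and> snd N (k mod fst N) (l mod fst N))"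

definition kron_list :: "bmat list \<Rightarrow> bmat" where
  "kron_list Ms = foldr kron Ms (1, \<lambda>_ _. True)"

definition decomposable :: "bmat \<Rightarrow> bool" where
  "decomposable A \<longleftrightarrow> (\<exists>Ms. length Ms > 1 \<and> (\<forall>M\<in>set Ms. fst M > 1) \<and>
       bmat_eq A (kron_list Ms))"

definition compatible_pair :: "nat \<Rightarrow> nat \<Rightarrow> nat \<Rightarrow> bool" where
  "compatible_pair n n1 n2 \<longleftrightarrow> n1 dvd n \<and> n2 dvd n \<and> n1 \<noteq> 1 \<and> n1 \<noteq> n \<and>
       n2 \<noteq> 1 \<and> n2 \<noteq> n \<and> n1 * n2 = n"

definition maximal :: "bmat \<Rightarrow> bool" where
  "maximal A \<longleftrightarrow> decomposable A \<and>
     (\<forall>n1 n2. compatible_pair (fst A) n1 n2 \<longrightarrow>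
        (\<exists>X Y. fst X = n1 \<and> fst Y = n2 \<and> bmat_eq A (kron X Y)))"

definition basis_mat :: "nat \<Rightarrow> nat \<Rightarrow> nat \<Rightarrow> bmat" where
  "basis_mat n i j = (n, \<lambda>k l. k = i \<and> l = j)"

end

theory Submission
  imports Defs
begin

text \<open>A basis matrix of size n1 n2 is the Kronecker product of the basis matrices of sizes
  n1 and n2 selected by the quotients and remainders of its indices modulo n2, so it factors
  along every compatible pair. The hypothesis that it is decomposable is used only because
  maximality includes decomposability by definition.\<close>

lemma div_mod_eq_iff:
  fixes k a c p :: nat
  assumes "c < p"
  shows "k div p = a \<and> k mod p = c \<longleftrightarrow> k = a * p + c"
  using assms div_mult_mod_eq[of k p] by auto

lemma kron_basis_mat:
  assumes "c < p" and "d < p"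
  shows "kron (basis_mat m a b) (basis_mat p c d) = basis_mat (m * p) (a * p + c) (b * p + d)"
  using div_mod_eq_iff[OF assms(1)] div_mod_eq_iff[OF assms(2)]
  by (auto simp: kron_def basis_mat_def fun_eq_iff)

lemma bmat_eq_refl: "bmat_eq M M"
  by (simp add: bmat_eq_def)

theorem lemma3:
  fixes n i j :: nat
  assumes "n \<ge> 2" and "i < n" and "j < n"
    and "decomposable (basis_mat n i j)"
  shows "maximal (basis_mat n i j)"
  unfolding maximal_def
proof (intro conjI allI impI)
  show "decomposable (basis_mat n i j)" by fact
next
  fix n1 n2 assume "compatible_pair (fst (basis_mat n i j)) n1 n2"
  then have "n = n1 * n2" and "n2 > 0"
    by (auto simp: compatible_pair_def basis_mat_def)
  then have "basis_mat n i j =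
      kron (basis_mat n1 (i div n2) (j div n2)) (basis_mat n2 (i mod n2) (j mod n2))"
    by (simp add: kron_basis_mat)
  then show "\<exists>X Y. fst X = n1 \<and> fst Y = n2 \<and> bmat_eq (basis_mat n i j) (kron X Y)"
    by (metis bmat_eq_refl basis_mat_def fst_conv)
qed

end
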